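(* Let $A=\{a_0,a_1,\dots,a_{k-1}\}\subseteq\mathcal{C}_n$ with $a_0<\dots<a_{k-1}$ and let $m\in\{0,\dots,k-1\}$. Then the set $\mathcal{DN}^{\,1}_m=\{\overline{a_m}\}\cup\mathcal{L}^{n-1}_{a_m}\left(\sigma^{(n)}_k(A)\right)$ is a subsemiring of the simplex $\sigma^{(n)}_k(A)$.
   Context: $\mathcal{C}_n=\{0,1,\dots,n-1\}$ with its usual order; $\widehat{\mathcal{E}}_{\mathcal{C}_n}$ is the set of all order-preserving maps $\mathcal{C}_n\to\mathcal{C}_n$ (not required to fix $0$), a semiring with $(\alpha+\beta)(x)=\max(\alpha(x),\beta(x))$ and $(\alpha\cdot\beta)(x)=\beta(\alpha(x))$. The simplex $\sigma^{(n)}_k(A)$ is the set of all $\alpha\in\widehat{\mathcal{E}}_{\mathcal{C}_n}$ with $\mathrm{im}(\alpha)\subseteq A$ (a subsemiring). $\overline{x}$ is the constant map with value $x$. For $s\in\{0,\dots,n-1\}$, the layer $\mathcal{L}^{s}_{a_m}\left(\sigma^{(n)}_k(A)\right)$ is the set of $\alpha\in\sigma^{(n)}_k(A)$ with exactly $s$ elements $i\in\mathcal{C}_n$ satisfying $\alpha(i)=a_m$. A subsemiring is a nonempty subset closed under $+$ and $\cdot$. *)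

theory Defs
  imports Main
begin

text \<open>Order-preserving maps C_n -> C_n, C_n = {0..<n}, represented as functions
  nat => nat that are 0 outside {0..<n} (canonical representatives).\<close>

definition endo :: "nat \<Rightarrow> (nat \<Rightarrow> nat) set" where
  "endo n = {f. (\<forall>x<n. f x < n) \<and> (\<forall>x y. x \<le> y \<and> y < n \<longrightarrow> f x \<le> f y)
               \<and> (\<forall>x. n \<le> x \<longrightarrow> f x = 0)}"

definition splus :: "nat \<Rightarrow> (nat \<Rightarrow> nat) \<Rightarrow> (nat \<Rightarrow> nat) \<Rightarrow> (nat \<Rightarrow> nat)" where
  "splus n \<alpha> \<beta> = (\<lambda>x. if x < n then max (\<alpha> x) (\<beta> x) else 0)"

definition stimes :: "nat \<Rightarrow> (nat \<Rightarrow> nat) \<Rightarrow> (nat \<Rightarrow> nat) \<Rightarrow> (nat \<Rightarrow> nat)" where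
  "stimes n \<alpha> \<beta> = (\<lambda>x. if x < n then \<beta> (\<alpha> x) else 0)"

definition const_map :: "nat \<Rightarrow> nat \<Rightarrow> (nat \<Rightarrow> nat)" where
  "const_map n a = (\<lambda>x. if x < n then a else 0)"

definition simplex :: "nat \<Rightarrow> nat set \<Rightarrow> (nat \<Rightarrow> nat) set" where
  "simplex n A = {\<alpha> \<in> endo n. (\<lambda>x. \<alpha> x) ` {0..<n} \<subseteq> A}"

definition layer :: "nat \<Rightarrow> nat \<Rightarrow> nat \<Rightarrow> nat set \<Rightarrow> (nat \<Rightarrow> nat) set" where
  "layer n s a A = {\<alpha> \<in> simplex n A. card {i. i < n \<and> \<alpha> i = a} = s}"

definition subsemiring :: "nat \<Rightarrow> (nat \<Rightarrow> nat) set \<Rightarrow> (nat \<Rightarrow> nat) set \<Rightarrow> bool" where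
  "subsemiring n S T \<longleftrightarrow> S \<subseteq> T \<and> S \<noteq> {} \<and>
     (\<forall>\<alpha>\<in>S. \<forall>\<beta>\<in>S. splus n \<alpha> \<beta> \<in> S \<and> stimes n \<alpha> \<beta> \<in> S)"

end

theory Submission
  imports Defs
begin

text \<open>An order-preserving map takes the value \<open>a\<^sub>m\<close> at \<open>n - 1\<close> points exactly when it is
  not constant and differs from \<open>a\<^sub>m\<close> only at one endpoint \<open>0\<close> or \<open>n - 1\<close> (an interior
  exception would be squeezed between two values equal to \<open>a\<^sub>m\<close>).  Such a map \<open>\<beta>\<close> fixes \<open>a\<^sub>m\<close>,
  so \<open>\<beta>(\<alpha> i) = a\<^sub>m\<close> wherever \<open>\<alpha> i = a\<^sub>m\<close>, giving closure under \<open>\<cdot>\<close>; and it satisfies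
  \<open>\<alpha> 0 \<le> a\<^sub>m \<le> \<alpha> (n - 1)\<close>, so a pointwise maximum of two such maps is again constant
  away from one endpoint, giving closure under \<open>+\<close>.\<close>

definition const_off_endpoint :: "nat \<Rightarrow> nat \<Rightarrow> (nat \<Rightarrow> nat) \<Rightarrow> bool" where
  "const_off_endpoint n c \<alpha> \<longleftrightarrow>
     (\<forall>i<n. i \<noteq> 0 \<longrightarrow> \<alpha> i = c) \<or> (\<forall>i<n. i \<noteq> n - 1 \<longrightarrow> \<alpha> i = c)"

lemma endoD:
  assumes "\<alpha> \<in> endo n"
  shows "x < n \<Longrightarrow> \<alpha> x < n"
    and "x \<le> y \<Longrightarrow> y < n \<Longrightarrow> \<alpha> x \<le> \<alpha> y"
    and "n \<le> x \<Longrightarrow> \<alpha> x = 0"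
  using assms by (auto simp: endo_def)

lemma simplexD:
  assumes "\<alpha> \<in> simplex n A"
  shows "\<alpha> \<in> endo n" and "x < n \<Longrightarrow> \<alpha> x \<in> A"
  using assms by (auto simp: simplex_def)

lemma const_map_in_simplex:
  assumes "c \<in> A" "c < n"
  shows "const_map n c \<in> simplex n A"
  using assms by (auto simp: simplex_def endo_def const_map_def)

lemma splus_in_simplex:
  assumes "\<alpha> \<in> simplex n A" "\<beta> \<in> simplex n A"
  shows "splus n \<alpha> \<beta> \<in> simplex n A"
proof -
  note \<alpha> = simplexD[OF assms(1)] endoD[OF simplexD(1)[OF assms(1)]]
  note \<beta> = simplexD[OF assms(2)] endoD[OF simplexD(1)[OF assms(2)]]
  have "max (\<alpha> x) (\<beta> x) \<le> max (\<alpha> y) (\<beta> y)" if "x \<le> y" "y < n" for x y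
    using \<alpha>(4)[OF that] \<beta>(4)[OF that] by linarith
  moreover have "max (\<alpha> x) (\<beta> x) \<in> A" "max (\<alpha> x) (\<beta> x) < n" if "x < n" for x
    using \<alpha>(2,3)[OF that] \<beta>(2,3)[OF that] by (simp_all add: max_def)
  ultimately show ?thesis
    by (auto simp: simplex_def endo_def splus_def)
qed

lemma stimes_in_simplex:
  assumes "\<alpha> \<in> simplex n A" "\<beta> \<in> simplex n A"
  shows "stimes n \<alpha> \<beta> \<in> simplex n A"
proof -
  note \<alpha> = endoD[OF simplexD(1)[OF assms(1)]]
  note \<beta> = simplexD[OF assms(2)] endoD[OF simplexD(1)[OF assms(2)]]
  have "\<beta> (\<alpha> x) \<le> \<beta> (\<alpha> y)" if "x \<le> y" "y < n" for x y
    using \<beta>(4) \<alpha>(1,2) that by simp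
  moreover have "\<beta> (\<alpha> x) \<in> A" "\<beta> (\<alpha> x) < n" if "x < n" for x
    using \<beta>(2,3) \<alpha>(1) that by simp_all
  ultimately show ?thesis
    by (auto simp: simplex_def endo_def stimes_def)
qed

lemma card_fibre_eq_pred_iff:
  assumes "\<alpha> \<in> endo n" "c < n"
  shows "(\<alpha> = const_map n c \<or> card {i. i < n \<and> \<alpha> i = c} = n - 1) \<longleftrightarrow>
         const_off_endpoint n c \<alpha>"
proof
  let ?E = "{i. i < n \<and> \<alpha> i = c}"
  assume "\<alpha> = const_map n c \<or> card ?E = n - 1"
  then show "const_off_endpoint n c \<alpha>"
  proof
    assume "\<alpha> = const_map n c"
    then show ?thesis by (auto simp: const_off_endpoint_def const_map_def)
  next
    assume card_E: "card ?E = n - 1"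
    let ?D = "{i. i < n \<and> \<alpha> i \<noteq> c}"
    have "?E \<union> ?D = {0..<n}" by auto
    then have "card ?E + card ?D = card {0..<n}"
      by (subst card_Un_disjoint[symmetric]) auto
    with card_E assms(2) have "card ?D = 1" by simp
    then obtain j where D: "?D = {j}" by (auto simp: card_Suc_eq)
    then have j: "j < n" "\<alpha> j \<noteq> c" and off_j: "\<And>i. i < n \<Longrightarrow> i \<noteq> j \<Longrightarrow> \<alpha> i = c"
      by auto
    have "j = 0 \<or> j = n - 1"
    proof (rule ccontr)
      assume "\<not> (j = 0 \<or> j = n - 1)"
      then have "\<alpha> 0 = c" "\<alpha> (n - 1) = c" using off_j assms(2) by auto
      moreover have "\<alpha> 0 \<le> \<alpha> j" "\<alpha> j \<le> \<alpha> (n - 1)" using endoD(2)[OF assms(1)] j by auto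
      ultimately show False using j by simp
    qed
    then show ?thesis using off_j by (auto simp: const_off_endpoint_def)
  qed
next
  let ?E = "{i. i < n \<and> \<alpha> i = c}"
  assume "const_off_endpoint n c \<alpha>"
  then obtain j where off_j: "\<And>i. i < n \<Longrightarrow> i \<noteq> j \<Longrightarrow> \<alpha> i = c"
    unfolding const_off_endpoint_def by blast
  have "n - 1 \<le> card ({0..<n} - {j})" by (simp add: card_Diff_singleton_if)
  also have "\<dots> \<le> card ?E" using off_j by (intro card_mono) auto
  finally have ge: "n - 1 \<le> card ?E" .
  have le: "card ?E \<le> n" using card_mono[of "{0..<n}" ?E] by fastforce
  show "\<alpha> = const_map n c \<or> card ?E = n - 1"
  proof (cases "card ?E = n")
    case True
    then have "?E = {0..<n}" by (intro card_subset_eq) auto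
    then have "\<alpha> = const_map n c"
      using endoD(3)[OF assms(1)] by (auto simp: const_map_def fun_eq_iff)
    then show ?thesis ..
  qed (use ge le in linarith)
qed

lemma const_off_endpoint_bounds:
  assumes "\<gamma> \<in> endo n" "1 < n" "const_off_endpoint n c \<gamma>"
  shows "\<gamma> 0 \<le> c" and "c \<le> \<gamma> (n - 1)"
  using assms(3) endoD(2)[OF assms(1), of 0 1] endoD(2)[OF assms(1), of 0 "n - 1"] assms(2)
  unfolding const_off_endpoint_def by auto

lemma const_off_endpoint_fixes:
  assumes "\<beta> \<in> endo n" "c < n" "const_off_endpoint n c \<beta>"
  shows "\<beta> c = c"
proof (cases "1 < n")
  case True
  note bounds = const_off_endpoint_bounds[OF assms(1) True assms(3)]
  have "\<beta> (n - 1) < n" using endoD(1)[OF assms(1)] True by simp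
  then show ?thesis
    using assms(2,3) bounds unfolding const_off_endpoint_def
    by (cases "c = 0"; cases "c = n - 1") auto
next
  case False
  with assms(2) have "n = 1" "c = 0" by auto
  then show ?thesis using endoD(1)[OF assms(1), of 0] by simp
qed

lemma splus_const_off_endpoint:
  assumes "\<alpha> \<in> endo n" "\<beta> \<in> endo n"
    and "const_off_endpoint n c \<alpha>" "const_off_endpoint n c \<beta>"
  shows "const_off_endpoint n c (splus n \<alpha> \<beta>)"
proof (cases "1 < n")
  case True
  show ?thesis
    using assms(3,4) const_off_endpoint_bounds[OF assms(1) True assms(3)]
      const_off_endpoint_bounds[OF assms(2) True assms(4)]
    unfolding const_off_endpoint_def splus_def by (auto simp: max_def)
qed (auto simp: const_off_endpoint_def)

lemma stimes_const_off_endpoint: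
  assumes "\<beta> \<in> endo n" "c < n"
    and "const_off_endpoint n c \<alpha>" "const_off_endpoint n c \<beta>"
  shows "const_off_endpoint n c (stimes n \<alpha> \<beta>)"
  using assms(3) const_off_endpoint_fixes[OF assms(1,2,4)]
  unfolding const_off_endpoint_def stimes_def by auto

theorem proposition2:
  fixes n k m :: nat and A :: "nat set"
  assumes "A \<subseteq> {0..<n}" and "card A = k" and "m < k"
  defines "a \<equiv> sorted_list_of_set A"
  shows "subsemiring n ({const_map n (a ! m)} \<union> layer n (n - 1) (a ! m) A) (simplex n A)"
proof -
  define c where "c = a ! m"
  have "finite A" using assms(1) finite_subset by blast
  then have "c \<in> A" using assms(2,3) unfolding c_def a_def
    by (metis length_sorted_list_of_set nth_mem set_sorted_list_of_set)
  moreover have "c < n" using \<open>c \<in> A\<close> assms(1) by auto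
  ultimately have const_c: "const_map n c \<in> simplex n A"
    by (rule const_map_in_simplex)
  have fibre_iff: "\<alpha> \<in> simplex n A \<Longrightarrow>
      (\<alpha> = const_map n c \<or> card {i. i < n \<and> \<alpha> i = c} = n - 1) \<longleftrightarrow> const_off_endpoint n c \<alpha>"
    for \<alpha> using card_fibre_eq_pred_iff[OF simplexD(1) \<open>c < n\<close>] .
  have DN: "{const_map n c} \<union> layer n (n - 1) c A = {\<alpha> \<in> simplex n A. const_off_endpoint n c \<alpha>}"
    using fibre_iff const_c by (auto simp: layer_def)
  have "const_off_endpoint n c (const_map n c)"
    using fibre_iff[OF const_c] by blast
  then show ?thesis
    unfolding c_def[symmetric] DN subsemiring_def
    using const_c \<open>c < n\<close>
    by (auto intro!: splus_in_simplex stimes_in_simplex splus_const_off_endpoint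
        stimes_const_off_endpoint simplexD(1))
qed

end
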